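(* Let $\mathbb{E}$ be a finitely complete category, $\Sigma$ a fibrational class of split epimorphisms, and suppose $\mathbb{E}$ is a $\Sigma$-Mal'tsev category. Let $(f,s)\colon X\rightleftarrows Y$ be a split epimorphism in $\Sigma$. Then there is at most one internal monoid structure on the object $(f,s)$ of the fibre $\mathrm{Pt}_Y(\mathbb{E})$, and when such a structure exists it is commutative.
   Context: A split epimorphism is a pair $(f,s)$ with $fs=1$. $\mathrm{Pt}_Y(\mathbb{E})$ is the category of split epimorphisms with codomain $Y$ and morphisms commuting with both the epimorphisms and the splittings; it is finitely complete, with terminal object $(1_Y,1_Y)$ and binary product of $(f,s)$ with itself given by $X\times_YX$ over $Y$. A class $\Sigma$ of split epimorphisms is fibrational if it contains all split epimorphisms $(f,s)$ with $f$ invertible and is stable under pullback along any morphism. A pair of morphisms with common codomain $Z$ is jointly extremally epic if it factors jointly through no non-invertible monomorphism into $Z$. $\mathbb{E}$ is $\Sigma$-Mal'tsev if for every split epimorphism $(f,s)\colon X\rightleftarrows Y$ in $\Sigma$ and every split epimorphism $(g,t)$ with $g\colon Y'\to Y$, letting $X'=Y'\times_YX$, $s'=(1_{Y'},sg)$, $\bar t=(tf,1_X)$, the pair $(s',\bar t)$ is jointly extremally epic. *)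

theory Defs
  imports Main
begin

text \<open>Categories with hom-sets: objects of type 'o, arrows of type 'm.
  comp g f is the composite "g after f".\<close>

record ('o, 'm) category =
  obj   :: "'o set"
  hom   :: "'o \<Rightarrow> 'o \<Rightarrow> 'm set"
  comp  :: "'m \<Rightarrow> 'm \<Rightarrow> 'm"
  ident :: "'o \<Rightarrow> 'm"

definition is_category :: "('o, 'm) category \<Rightarrow> bool" where
  "is_category C \<longleftrightarrow>
     (\<forall>A B f. f \<in> hom C A B \<longrightarrow> A \<in> obj C \<and> B \<in> obj C) \<and>
     (\<forall>A B A' B' f. f \<in> hom C A B \<longrightarrow> f \<in> hom C A' B' \<longrightarrow> A = A' \<and> B = B') \<and>
     (\<forall>A\<in>obj C. ident C A \<in> hom C A A) \<and>
     (\<forall>A B D f g. f \<in> hom C A B \<longrightarrow> g \<in> hom C B D \<longrightarrow> comp C g f \<in> hom C A D) \<and>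
     (\<forall>A B f. f \<in> hom C A B \<longrightarrow> comp C f (ident C A) = f \<and> comp C (ident C B) f = f) \<and>
     (\<forall>A B D E f g h. f \<in> hom C A B \<longrightarrow> g \<in> hom C B D \<longrightarrow> h \<in> hom C D E \<longrightarrow>
        comp C h (comp C g f) = comp C (comp C h g) f)"

definition is_iso :: "('o, 'm) category \<Rightarrow> 'o \<Rightarrow> 'o \<Rightarrow> 'm \<Rightarrow> bool" where
  "is_iso C A B f \<longleftrightarrow> f \<in> hom C A B \<and>
     (\<exists>g \<in> hom C B A. comp C g f = ident C A \<and> comp C f g = ident C B)"

definition is_mono :: "('o, 'm) category \<Rightarrow> 'o \<Rightarrow> 'o \<Rightarrow> 'm \<Rightarrow> bool" where
  "is_mono C A B i \<longleftrightarrow> i \<in> hom C A B \<and>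
     (\<forall>T a b. a \<in> hom C T A \<longrightarrow> b \<in> hom C T A \<longrightarrow> comp C i a = comp C i b \<longrightarrow> a = b)"

definition split_epi :: "('o, 'm) category \<Rightarrow> 'o \<Rightarrow> 'o \<Rightarrow> 'm \<Rightarrow> 'm \<Rightarrow> bool" where
  "split_epi C X Y f s \<longleftrightarrow> f \<in> hom C X Y \<and> s \<in> hom C Y X \<and> comp C f s = ident C Y"

definition is_terminal :: "('o, 'm) category \<Rightarrow> 'o \<Rightarrow> bool" where
  "is_terminal C T0 \<longleftrightarrow> T0 \<in> obj C \<and> (\<forall>A \<in> obj C. \<exists>!u. u \<in> hom C A T0)"

definition is_pullback :: "('o, 'm) category \<Rightarrow> 'o \<Rightarrow> 'o \<Rightarrow> 'o \<Rightarrow> 'm \<Rightarrow> 'm \<Rightarrow> 'o \<Rightarrow> 'm \<Rightarrow> 'm \<Rightarrow> bool" where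
  "is_pullback C X Y Z f g P p1 p2 \<longleftrightarrow>
     f \<in> hom C X Z \<and> g \<in> hom C Y Z \<and> p1 \<in> hom C P X \<and> p2 \<in> hom C P Y \<and>
     comp C f p1 = comp C g p2 \<and>
     (\<forall>T q1 q2. q1 \<in> hom C T X \<longrightarrow> q2 \<in> hom C T Y \<longrightarrow> comp C f q1 = comp C g q2 \<longrightarrow>
        (\<exists>!u. u \<in> hom C T P \<and> comp C p1 u = q1 \<and> comp C p2 u = q2))"

definition finitely_complete :: "('o, 'm) category \<Rightarrow> bool" where
  "finitely_complete C \<longleftrightarrow> (\<exists>T0. is_terminal C T0) \<and>
     (\<forall>X Y Z f g. f \<in> hom C X Z \<longrightarrow> g \<in> hom C Y Z \<longrightarrow> (\<exists>P p1 p2. is_pullback C X Y Z f g P p1 p2))"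

definition fibrational :: "('o, 'm) category \<Rightarrow> ('o \<times> 'o \<times> 'm \<times> 'm) set \<Rightarrow> bool" where
  "fibrational C Sig \<longleftrightarrow>
     (\<forall>X Y f s. (X, Y, f, s) \<in> Sig \<longrightarrow> split_epi C X Y f s) \<and>
     (\<forall>X Y f s. split_epi C X Y f s \<longrightarrow> is_iso C X Y f \<longrightarrow> (X, Y, f, s) \<in> Sig) \<and>
     (\<forall>X Y f s Y' h P p1 p2 s'. (X, Y, f, s) \<in> Sig \<longrightarrow> h \<in> hom C Y' Y \<longrightarrow>
        is_pullback C Y' X Y h f P p1 p2 \<longrightarrow>
        s' \<in> hom C Y' P \<longrightarrow> comp C p1 s' = ident C Y' \<longrightarrow> comp C p2 s' = comp C s h \<longrightarrow>
        (P, Y', p1, s') \<in> Sig)"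

definition jointly_extremally_epic :: "('o, 'm) category \<Rightarrow> 'o \<Rightarrow> 'o \<Rightarrow> 'o \<Rightarrow> 'm \<Rightarrow> 'm \<Rightarrow> bool" where
  "jointly_extremally_epic C A B Z a b \<longleftrightarrow> a \<in> hom C A Z \<and> b \<in> hom C B Z \<and>
     (\<forall>W i a' b'. is_mono C W Z i \<longrightarrow> a' \<in> hom C A W \<longrightarrow> b' \<in> hom C B W \<longrightarrow>
        comp C i a' = a \<longrightarrow> comp C i b' = b \<longrightarrow> is_iso C W Z i)"

text \<open>X' = Y' \<times>_Y X with projections p1 : X' \<rightarrow> Y', p2 : X' \<rightarrow> X;
  s' = (1_{Y'}, s g), tbar = (t f, 1_X).\<close>
definition sigma_maltsev :: "('o, 'm) category \<Rightarrow> ('o \<times> 'o \<times> 'm \<times> 'm) set \<Rightarrow> bool" where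
  "sigma_maltsev C Sig \<longleftrightarrow>
     (\<forall>X Y f s Y' g t X' p1 p2 s' tb. (X, Y, f, s) \<in> Sig \<longrightarrow> split_epi C Y' Y g t \<longrightarrow>
        is_pullback C Y' X Y g f X' p1 p2 \<longrightarrow>
        s' \<in> hom C Y' X' \<longrightarrow> comp C p1 s' = ident C Y' \<longrightarrow> comp C p2 s' = comp C s g \<longrightarrow>
        tb \<in> hom C X X' \<longrightarrow> comp C p1 tb = comp C t f \<longrightarrow> comp C p2 tb = ident C X \<longrightarrow>
        jointly_extremally_epic C Y' X X' s' tb)"

definition pair :: "('o, 'm) category \<Rightarrow> 'o \<Rightarrow> 'm \<Rightarrow> 'm \<Rightarrow> 'o \<Rightarrow> 'm \<Rightarrow> 'm \<Rightarrow> 'm" where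
  "pair C P p1 p2 T a b = (THE u. u \<in> hom C T P \<and> comp C p1 u = a \<and> comp C p2 u = b)"

text \<open>The product of
  (f,s) with itself in Pt_Y(E) is X \<times>_Y X = (P, p1, p2); its split epi is f p1 and its
  splitting is (s,s). The unit is a morphism from the terminal object (1_Y,1_Y) of Pt_Y(E),
  hence necessarily s. The multiplication m : P \<rightarrow> X must be a morphism of Pt_Y(E),
  i.e. f m = f p1 and m (s,s) = s; unit laws m (sf,1) = 1 = m (1,sf); associativity is
  stated on generalized elements a, b, c : T \<rightarrow> X over Y.\<close>
definition internal_monoid :: "('o, 'm) category \<Rightarrow> 'o \<Rightarrow> 'o \<Rightarrow> 'm \<Rightarrow> 'm \<Rightarrow> 'o \<Rightarrow> 'm \<Rightarrow> 'm \<Rightarrow> 'm \<Rightarrow> bool" where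
  "internal_monoid C X Y f s P p1 p2 m \<longleftrightarrow>
     m \<in> hom C P X \<and>
     comp C f m = comp C f p1 \<and>
     comp C m (pair C P p1 p2 Y s s) = s \<and>
     comp C m (pair C P p1 p2 X (comp C s f) (ident C X)) = ident C X \<and>
     comp C m (pair C P p1 p2 X (ident C X) (comp C s f)) = ident C X \<and>
     (\<forall>T a b c. a \<in> hom C T X \<longrightarrow> b \<in> hom C T X \<longrightarrow> c \<in> hom C T X \<longrightarrow>
        comp C f a = comp C f b \<longrightarrow> comp C f b = comp C f c \<longrightarrow>
        comp C m (pair C P p1 p2 T (comp C m (pair C P p1 p2 T a b)) c) =
        comp C m (pair C P p1 p2 T a (comp C m (pair C P p1 p2 T b c))))"

definition commutative_monoid :: "('o, 'm) category \<Rightarrow> 'o \<Rightarrow> 'm \<Rightarrow> 'm \<Rightarrow> 'm \<Rightarrow> bool" where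
  "commutative_monoid C P p1 p2 m \<longleftrightarrow> comp C m (pair C P p1 p2 P p2 p1) = m"

end

theory Submission
  imports Defs
begin

text \<open>Write \<open>\<iota>\<^sub>1 = (1, sf)\<close> and \<open>\<iota>\<^sub>2 = (sf, 1)\<close> for the two sections \<open>X \<rightarrow> X \<times>\<^sub>Y X\<close>. Taking
  \<open>(g, t) = (f, s)\<close> in the \<open>\<Sigma>\<close>-Mal'tsev condition shows that \<open>\<iota>\<^sub>1, \<iota>\<^sub>2\<close> are jointly extremally
  epic. In a finitely complete category this makes them jointly epic: two maps
  \<open>m, m' : X \<times>\<^sub>Y X \<rightarrow> X\<close> over \<open>Y\<close> that agree on \<open>\<iota>\<^sub>1\<close> and \<open>\<iota>\<^sub>2\<close> have an equalizer through which
  both sections factor, and that equalizer is a monomorphism, hence invertible. The unit laws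
  say that every monoid multiplication sends both \<open>\<iota>\<^sub>1\<close> and \<open>\<iota>\<^sub>2\<close> to \<open>1\<^sub>X\<close>; so any two
  multiplications coincide, and a multiplication coincides with its composite with the twist.\<close>

context
  fixes C :: "('o, 'm) category"
  assumes cat: "is_category C"
begin

lemma comp_in_hom: "f \<in> hom C A B \<Longrightarrow> g \<in> hom C B D \<Longrightarrow> comp C g f \<in> hom C A D"
  using cat unfolding is_category_def by blast

lemma comp_assoc:
  "f \<in> hom C A B \<Longrightarrow> g \<in> hom C B D \<Longrightarrow> h \<in> hom C D E \<Longrightarrow>
   comp C (comp C h g) f = comp C h (comp C g f)"
  using cat unfolding is_category_def by metis

lemma comp_ident_right: "f \<in> hom C A B \<Longrightarrow> comp C f (ident C A) = f"
  using cat unfolding is_category_def by blast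

lemma comp_ident_left: "f \<in> hom C A B \<Longrightarrow> comp C (ident C B) f = f"
  using cat unfolding is_category_def by blast

lemma ident_dom_in_hom: "f \<in> hom C A B \<Longrightarrow> ident C A \<in> hom C A A"
  using cat unfolding is_category_def by meson

lemma pullback_commutes_after:
  assumes "is_pullback C A B Z f g P p1 p2" "u \<in> hom C T P"
  shows "comp C f (comp C p1 u) = comp C g (comp C p2 u)"
proof -
  have "p1 \<in> hom C P A" "p2 \<in> hom C P B" "f \<in> hom C A Z" "g \<in> hom C B Z"
    "comp C f p1 = comp C g p2"
    using assms(1) unfolding is_pullback_def by auto
  then show ?thesis using comp_assoc[OF assms(2)] by metis
qed

lemma pullback_maps_eqI:
  assumes pb: "is_pullback C A B Z f g P p1 p2" and "u \<in> hom C T P" "v \<in> hom C T P"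
    and "comp C p1 u = comp C p1 v" "comp C p2 u = comp C p2 v"
  shows "u = v"
proof -
  have "comp C p1 v \<in> hom C T A" "comp C p2 v \<in> hom C T B"
    using pb assms(3) comp_in_hom unfolding is_pullback_def by blast+
  then show ?thesis
    using pb assms pullback_commutes_after[OF pb assms(3)] unfolding is_pullback_def by blast
qed

end

lemma pullback_pair:
  assumes "is_pullback C A B Z f g P p1 p2" "a \<in> hom C T A" "b \<in> hom C T B"
    and "comp C f a = comp C g b"
  shows "pair C P p1 p2 T a b \<in> hom C T P" "comp C p1 (pair C P p1 p2 T a b) = a"
    "comp C p2 (pair C P p1 p2 T a b) = b"
proof -
  have "\<exists>!u. u \<in> hom C T P \<and> comp C p1 u = a \<and> comp C p2 u = b"
    using assms unfolding is_pullback_def by blast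
  then have "pair C P p1 p2 T a b \<in> hom C T P \<and> comp C p1 (pair C P p1 p2 T a b) = a
      \<and> comp C p2 (pair C P p1 p2 T a b) = b"
    unfolding pair_def by (rule theI')
  then show "pair C P p1 p2 T a b \<in> hom C T P" "comp C p1 (pair C P p1 p2 T a b) = a"
    "comp C p2 (pair C P p1 p2 T a b) = b" by blast+
qed

lemma pair_comp:
  assumes cat: "is_category C" and pb: "is_pullback C A B Z f g P p1 p2"
    and a: "a \<in> hom C T A" and b: "b \<in> hom C T B" and fg: "comp C f a = comp C g b"
    and h: "h \<in> hom C T' T"
  shows "comp C (pair C P p1 p2 T a b) h = pair C P p1 p2 T' (comp C a h) (comp C b h)"
proof -
  have p: "p1 \<in> hom C P A" "p2 \<in> hom C P B" "f \<in> hom C A Z" "g \<in> hom C B Z"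
    using pb unfolding is_pullback_def by auto
  note ab = pullback_pair[OF pb a b fg]
  have "comp C f (comp C a h) = comp C g (comp C b h)"
    using fg comp_assoc[OF cat h a p(3)] comp_assoc[OF cat h b p(4)] by simp
  note abh = pullback_pair[OF pb comp_in_hom[OF cat h a] comp_in_hom[OF cat h b] this]
  show ?thesis
    using comp_assoc[OF cat h ab(1) p(1)] comp_assoc[OF cat h ab(1) p(2)] ab abh
    by (intro pullback_maps_eqI[OF cat pb comp_in_hom[OF cat h ab(1)] abh(1)]) simp_all
qed

text \<open>The equalizer of two maps \<open>m, m' : A \<rightarrow> X\<close> over \<open>Y\<close> is the pullback of \<open>(m, m')\<close> along
  the diagonal of the kernel pair of \<open>f\<close>.\<close>

lemma equalizer_over_base:
  assumes cat: "is_category C" and fc: "finitely_complete C"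
    and pb: "is_pullback C X X Y f f P p1 p2"
    and m: "m \<in> hom C A X" and m': "m' \<in> hom C A X" and fm: "comp C f m = comp C f m'"
  obtains E e where "is_mono C E A e" "comp C m e = comp C m' e"
    "\<And>T i. i \<in> hom C T A \<Longrightarrow> comp C m i = comp C m' i \<Longrightarrow> \<exists>u \<in> hom C T E. comp C e u = i"
proof -
  have p: "p1 \<in> hom C P X" "p2 \<in> hom C P X" "f \<in> hom C X Y"
    using pb unfolding is_pullback_def by auto
  have idX: "ident C X \<in> hom C X X" using ident_dom_in_hom[OF cat p(3)] .
  define d where "d = pair C P p1 p2 X (ident C X) (ident C X)"
  have d: "d \<in> hom C X P" "comp C p1 d = ident C X" "comp C p2 d = ident C X"
    using pullback_pair[OF pb idX idX] d_def by auto
  define mu where "mu = pair C P p1 p2 A m m'"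
  have mu: "mu \<in> hom C A P" "comp C p1 mu = m" "comp C p2 mu = m'"
    using pullback_pair[OF pb m m' fm] mu_def by auto
  obtain E e q where E: "is_pullback C A X P mu d E e q"
    using fc mu(1) d(1) unfolding finitely_complete_def by blast
  have eq: "e \<in> hom C E A" "q \<in> hom C E X" "comp C mu e = comp C d q"
    using E unfolding is_pullback_def by auto
  have proj_e: "comp C p (comp C mu e) = q" if "p \<in> hom C P X" "comp C p d = ident C X" for p
    using eq that comp_assoc[OF cat eq(2) d(1) that(1)] comp_ident_left[OF cat eq(2)] by simp
  have me: "comp C m e = q" and m'e: "comp C m' e = q"
    using proj_e[OF p(1) d(2)] proj_e[OF p(2) d(3)] mu comp_assoc[OF cat eq(1) mu(1)] p
    by metis+
  have mono: "is_mono C E A e"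
    unfolding is_mono_def
  proof (intro conjI allI impI)
    fix T a b assume a: "a \<in> hom C T E" and b: "b \<in> hom C T E" and ab: "comp C e a = comp C e b"
    have "comp C q a = comp C q b"
      using ab me comp_assoc[OF cat a eq(1) m] comp_assoc[OF cat b eq(1) m] by simp
    then show "a = b" using pullback_maps_eqI[OF cat E a b ab] by blast
  qed (rule eq(1))
  have factor: "\<exists>u \<in> hom C T E. comp C e u = i"
    if i: "i \<in> hom C T A" and mi_eq: "comp C m i = comp C m' i" for T i
  proof -
    have mi: "comp C m i \<in> hom C T X" using comp_in_hom[OF cat i m] .
    have "comp C mu i = pair C P p1 p2 T (comp C m i) (comp C m' i)"
      using pair_comp[OF cat pb m m' fm i] mu_def by simp
    also have "\<dots> = comp C d (comp C m i)"
      using pair_comp[OF cat pb idX idX _ mi] mi_eq comp_ident_left[OF cat mi] d_def by simp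
    finally have "\<exists>!u. u \<in> hom C T E \<and> comp C e u = i \<and> comp C q u = comp C m i"
      using E i mi unfolding is_pullback_def by blast
    then show ?thesis by blast
  qed
  show ?thesis using that[OF mono _ factor] me m'e by simp
qed

lemma jointly_extremally_epic_cancel_over_base:
  assumes cat: "is_category C" and fc: "finitely_complete C"
    and pb: "is_pullback C X X Y f f P p1 p2"
    and je: "jointly_extremally_epic C A B Z a b"
    and m: "m \<in> hom C Z X" and m': "m' \<in> hom C Z X" and fm: "comp C f m = comp C f m'"
    and ma: "comp C m a = comp C m' a" and mb: "comp C m b = comp C m' b"
  shows "m = m'"
proof -
  obtain E e where mono: "is_mono C E Z e" and me: "comp C m e = comp C m' e"
    and factor: "\<And>T i. i \<in> hom C T Z \<Longrightarrow> comp C m i = comp C m' i \<Longrightarrow> \<exists>u \<in> hom C T E. comp C e u = i"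
    using equalizer_over_base[OF cat fc pb m m' fm] by blast
  have "a \<in> hom C A Z" "b \<in> hom C B Z" using je unfolding jointly_extremally_epic_def by auto
  then have "is_iso C E Z e"
    using je mono factor ma mb unfolding jointly_extremally_epic_def by metis
  then obtain g where g: "g \<in> hom C Z E" "comp C e g = ident C Z" unfolding is_iso_def by blast
  have e: "e \<in> hom C E Z" using mono unfolding is_mono_def by blast
  show ?thesis
    using comp_assoc[OF cat g(1) e m] comp_assoc[OF cat g(1) e m'] g me
      comp_ident_right[OF cat m] comp_ident_right[OF cat m'] by metis
qed

lemma kernel_pair_sections:
  assumes cat: "is_category C" and se: "split_epi C X Y f s"
    and pb: "is_pullback C X X Y f f P p1 p2"
  defines "i1 \<equiv> pair C P p1 p2 X (ident C X) (comp C s f)"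
    and "i2 \<equiv> pair C P p1 p2 X (comp C s f) (ident C X)"
  shows "i1 \<in> hom C X P" "comp C p1 i1 = ident C X" "comp C p2 i1 = comp C s f"
    and "i2 \<in> hom C X P" "comp C p1 i2 = comp C s f" "comp C p2 i2 = ident C X"
proof -
  have fs: "f \<in> hom C X Y" "s \<in> hom C Y X" "comp C f s = ident C Y"
    using se unfolding split_epi_def by auto
  have idX: "ident C X \<in> hom C X X" using ident_dom_in_hom[OF cat fs(1)] .
  have sf: "comp C s f \<in> hom C X X" using comp_in_hom[OF cat fs(1) fs(2)] .
  have "comp C f (ident C X) = comp C f (comp C s f)"
    using comp_assoc[OF cat fs(1) fs(2) fs(1)] fs(3) comp_ident_left[OF cat fs(1)]
      comp_ident_right[OF cat fs(1)] by simp
  note i1 = pullback_pair[OF pb idX sf this] and i2 = pullback_pair[OF pb sf idX this[symmetric]]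
  show "i1 \<in> hom C X P" "comp C p1 i1 = ident C X" "comp C p2 i1 = comp C s f"
    and "i2 \<in> hom C X P" "comp C p1 i2 = comp C s f" "comp C p2 i2 = ident C X"
    using i1 i2 unfolding i1_def i2_def by blast+
qed

lemma sigma_maltsev_sections_jointly_extremally_epic:
  assumes cat: "is_category C" and M: "sigma_maltsev C Sig"
    and Sig: "(X, Y, f, s) \<in> Sig" and se: "split_epi C X Y f s"
    and pb: "is_pullback C X X Y f f P p1 p2"
  shows "jointly_extremally_epic C X X P
           (pair C P p1 p2 X (ident C X) (comp C s f)) (pair C P p1 p2 X (comp C s f) (ident C X))"
  using kernel_pair_sections[OF cat se pb]
  by (intro M[unfolded sigma_maltsev_def, rule_format, OF Sig se pb])

lemma internal_monoidD:
  assumes "internal_monoid C X Y f s P p1 p2 m"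
  shows "m \<in> hom C P X" "comp C f m = comp C f p1"
    "comp C m (pair C P p1 p2 X (ident C X) (comp C s f)) = ident C X"
    "comp C m (pair C P p1 p2 X (comp C s f) (ident C X)) = ident C X"
  using assms unfolding internal_monoid_def by (simp_all only: conj_assoc)

lemma internal_monoid_unique:
  assumes cat: "is_category C" and fc: "finitely_complete C"
    and je: "jointly_extremally_epic C X X P
           (pair C P p1 p2 X (ident C X) (comp C s f)) (pair C P p1 p2 X (comp C s f) (ident C X))"
    and pb: "is_pullback C X X Y f f P p1 p2"
    and "internal_monoid C X Y f s P p1 p2 m" "internal_monoid C X Y f s P p1 p2 m'"
  shows "m = m'"
proof -
  note m = internal_monoidD[OF assms(5)] and m' = internal_monoidD[OF assms(6)]
  show ?thesis
    using jointly_extremally_epic_cancel_over_base[OF cat fc pb je m(1) m'(1)] m m' by simp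
qed

lemma internal_monoid_commutative:
  assumes cat: "is_category C" and fc: "finitely_complete C"
    and je: "jointly_extremally_epic C X X P
           (pair C P p1 p2 X (ident C X) (comp C s f)) (pair C P p1 p2 X (comp C s f) (ident C X))"
    and pb: "is_pullback C X X Y f f P p1 p2" and se: "split_epi C X Y f s"
    and mon: "internal_monoid C X Y f s P p1 p2 m"
  shows "commutative_monoid C P p1 p2 m"
proof -
  define i1 where "i1 = pair C P p1 p2 X (ident C X) (comp C s f)"
  define i2 where "i2 = pair C P p1 p2 X (comp C s f) (ident C X)"
  define t where "t = pair C P p1 p2 P p2 p1"
  have p: "p1 \<in> hom C P X" "p2 \<in> hom C P X" "f \<in> hom C X Y" "comp C f p1 = comp C f p2"
    using pb unfolding is_pullback_def by auto
  have m: "m \<in> hom C P X" "comp C f m = comp C f p1" "comp C m i1 = ident C X"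
    "comp C m i2 = ident C X"
    using internal_monoidD[OF mon] unfolding i1_def i2_def by simp_all
  note i = kernel_pair_sections[OF cat se pb, folded i1_def i2_def]
  note t = pullback_pair[OF pb p(2) p(1) p(4)[symmetric], folded t_def]
  have "comp C t i1 = pair C P p1 p2 X (comp C p2 i1) (comp C p1 i1)"
    and "comp C t i2 = pair C P p1 p2 X (comp C p2 i2) (comp C p1 i2)"
    using pair_comp[OF cat pb p(2) p(1) p(4)[symmetric]] i t_def by auto
  then have ti: "comp C t i1 = i2" "comp C t i2 = i1"
    using i unfolding i1_def i2_def by simp_all
  have "comp C f (comp C m t) = comp C f m"
    using comp_assoc[OF cat t(1) m(1) p(3)] comp_assoc[OF cat t(1) p(1) p(3)] m(2) t p(4) by simp
  moreover have "comp C (comp C m t) i1 = comp C m i1" "comp C (comp C m t) i2 = comp C m i2"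
    using comp_assoc[OF cat i(1) t(1) m(1)] comp_assoc[OF cat i(4) t(1) m(1)] ti m(3,4) by simp_all
  ultimately have "comp C m t = m"
    using jointly_extremally_epic_cancel_over_base[OF cat fc pb je comp_in_hom[OF cat t(1) m(1)] m(1)]
    unfolding i1_def i2_def by blast
  then show ?thesis unfolding commutative_monoid_def t_def .
qed

theorem corollary2p5:
  fixes C :: "('o, 'm) category"
    and Sig :: "('o \<times> 'o \<times> 'm \<times> 'm) set"
  assumes "is_category C"
    and "finitely_complete C"
    and "fibrational C Sig"
    and "sigma_maltsev C Sig"
    and "(X, Y, f, s) \<in> Sig"
    and "is_pullback C X X Y f f P p1 p2"
  shows "(\<forall>m m'. internal_monoid C X Y f s P p1 p2 m \<longrightarrow> internal_monoid C X Y f s P p1 p2 m' \<longrightarrow> m = m')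
       \<and> (\<forall>m. internal_monoid C X Y f s P p1 p2 m \<longrightarrow> commutative_monoid C P p1 p2 m)"
proof -
  have se: "split_epi C X Y f s" using assms(3,5) unfolding fibrational_def by blast
  then have je: "jointly_extremally_epic C X X P
      (pair C P p1 p2 X (ident C X) (comp C s f)) (pair C P p1 p2 X (comp C s f) (ident C X))"
    by (rule sigma_maltsev_sections_jointly_extremally_epic[OF assms(1,4,5) _ assms(6)])
  show ?thesis
    using internal_monoid_unique[OF assms(1,2) je assms(6)]
      internal_monoid_commutative[OF assms(1,2) je assms(6) se] by blast
qed

end
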